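(* Let $X$ be a homogeneous chain that is not simple and has no proper regular interval which is a simple chain. Then $(\mathrm{Aut}(X),\tau_p)$ is Roelcke precompact if and only if for every proper regular interval $J$ of $X$ the group $(\mathrm{Aut}(X/J),\tau_\partial)$ is Roelcke precompact.
   Context: Chain: linearly ordered set; $\mathrm{Aut}(Y)$: order-preserving bijections; homogeneous: $\mathrm{Aut}(X)$ transitive. An interval is a convex subset; $J$ is regular if for all $x,y\in J$, $g\in\mathrm{Aut}(X)$, $g(x)\in J\Rightarrow g(y)\in J$; proper if neither a singleton nor $X$. A homogeneous chain is simple if it has no proper regular interval. For a proper regular interval $J$, $X/J$ is the chain of equivalence classes of $x\sim_J y\iff\forall g\in\mathrm{Aut}(X)\,(g(x)\in J\Rightarrow g(y)\in J)$, with the induced order. $\tau_p$: topology of pointwise convergence w.r.t. the order topology on $X$; $\tau_\partial$: permutation topology (identity neighbourhood base: pointwise stabilizers of finite sets). Roelcke precompact: the Roelcke uniformity (greatest lower bound of left and right uniformities) is totally bounded. *)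

theory Defs
  imports "HOL-Analysis.Analysis"
begin

text \<open>A chain is a carrier set X with a linear order le on X.
  Automorphisms are represented as functions that are the identity outside X,
  so that the group operation is composition and the unit is id.\<close>

definition is_chain :: "'a set \<Rightarrow> ('a \<Rightarrow> 'a \<Rightarrow> bool) \<Rightarrow> bool" where
  "is_chain X le \<longleftrightarrow>
     (\<forall>x\<in>X. le x x) \<and>
     (\<forall>x\<in>X. \<forall>y\<in>X. le x y \<and> le y x \<longrightarrow> x = y) \<and>
     (\<forall>x\<in>X. \<forall>y\<in>X. \<forall>z\<in>X. le x y \<and> le y z \<longrightarrow> le x z) \<and>
     (\<forall>x\<in>X. \<forall>y\<in>X. le x y \<or> le y x)"

definition Aut :: "'a set \<Rightarrow> ('a \<Rightarrow> 'a \<Rightarrow> bool) \<Rightarrow> ('a \<Rightarrow> 'a) set" where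
  "Aut X le = {f. bij_betw f X X \<and> (\<forall>x\<in>X. \<forall>y\<in>X. le x y \<longrightarrow> le (f x) (f y))
                 \<and> (\<forall>x. x \<notin> X \<longrightarrow> f x = x)}"

definition homogeneous :: "'a set \<Rightarrow> ('a \<Rightarrow> 'a \<Rightarrow> bool) \<Rightarrow> bool" where
  "homogeneous X le \<longleftrightarrow> is_chain X le \<and> (\<forall>x\<in>X. \<forall>y\<in>X. \<exists>g\<in>Aut X le. g x = y)"

definition is_interval :: "'a set \<Rightarrow> ('a \<Rightarrow> 'a \<Rightarrow> bool) \<Rightarrow> 'a set \<Rightarrow> bool" where
  "is_interval X le J \<longleftrightarrow> J \<subseteq> X \<and> J \<noteq> {} \<and>
     (\<forall>x\<in>J. \<forall>z\<in>J. \<forall>y\<in>X. le x y \<and> le y z \<longrightarrow> y \<in> J)"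

definition regular_interval :: "'a set \<Rightarrow> ('a \<Rightarrow> 'a \<Rightarrow> bool) \<Rightarrow> 'a set \<Rightarrow> bool" where
  "regular_interval X le J \<longleftrightarrow> is_interval X le J \<and>
     (\<forall>x\<in>J. \<forall>y\<in>J. \<forall>g\<in>Aut X le. g x \<in> J \<longrightarrow> g y \<in> J)"

definition proper_regular_interval :: "'a set \<Rightarrow> ('a \<Rightarrow> 'a \<Rightarrow> bool) \<Rightarrow> 'a set \<Rightarrow> bool" where
  "proper_regular_interval X le J \<longleftrightarrow> regular_interval X le J \<and>
     (\<nexists>a. J = {a}) \<and> J \<noteq> X"

definition simple_chain :: "'a set \<Rightarrow> ('a \<Rightarrow> 'a \<Rightarrow> bool) \<Rightarrow> bool" where
  "simple_chain X le \<longleftrightarrow> homogeneous X le \<and> (\<nexists>J. proper_regular_interval X le J)"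

definition quot_rel :: "'a set \<Rightarrow> ('a \<Rightarrow> 'a \<Rightarrow> bool) \<Rightarrow> 'a set \<Rightarrow> ('a \<times> 'a) set" where
  "quot_rel X le J = {(x, y). x \<in> X \<and> y \<in> X \<and> (\<forall>g\<in>Aut X le. g x \<in> J \<longrightarrow> g y \<in> J)}"

definition quot_carrier :: "'a set \<Rightarrow> ('a \<Rightarrow> 'a \<Rightarrow> bool) \<Rightarrow> 'a set \<Rightarrow> 'a set set" where
  "quot_carrier X le J = X // quot_rel X le J"

definition quot_le :: "('a \<Rightarrow> 'a \<Rightarrow> bool) \<Rightarrow> 'a set \<Rightarrow> 'a set \<Rightarrow> bool" where
  "quot_le le A B \<longleftrightarrow> A = B \<or> (\<forall>a\<in>A. \<forall>b\<in>B. le a b)"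

definition order_topology_on :: "'a set \<Rightarrow> ('a \<Rightarrow> 'a \<Rightarrow> bool) \<Rightarrow> 'a topology" where
  "order_topology_on X le = topology_generated_by
     (insert X ((\<lambda>a. {y\<in>X. le y a \<and> y \<noteq> a}) ` X \<union> (\<lambda>a. {y\<in>X. le a y \<and> y \<noteq> a}) ` X))"

definition pointwise_topology :: "'a set \<Rightarrow> ('a \<Rightarrow> 'a \<Rightarrow> bool) \<Rightarrow> ('a \<Rightarrow> 'a) topology" where
  "pointwise_topology X le = topology_generated_by
     (insert (Aut X le) {{g \<in> Aut X le. g x \<in> V} | x V. x \<in> X \<and> openin (order_topology_on X le) V})"

definition nhds_id_p :: "'a set \<Rightarrow> ('a \<Rightarrow> 'a \<Rightarrow> bool) \<Rightarrow> ('a \<Rightarrow> 'a) set set" where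
  "nhds_id_p X le = {U. U \<subseteq> Aut X le \<and>
     (\<exists>W. openin (pointwise_topology X le) W \<and> id \<in> W \<and> W \<subseteq> U)}"

definition nhds_id_perm :: "'a set \<Rightarrow> ('a \<Rightarrow> 'a \<Rightarrow> bool) \<Rightarrow> ('a \<Rightarrow> 'a) set set" where
  "nhds_id_perm X le = {U. U \<subseteq> Aut X le \<and>
     (\<exists>F. finite F \<and> F \<subseteq> X \<and> {g \<in> Aut X le. \<forall>x\<in>F. g x = x} \<subseteq> U)}"

definition roelcke_entourage :: "('a \<Rightarrow> 'a) set \<Rightarrow> ('a \<Rightarrow> 'a) set \<Rightarrow> (('a \<Rightarrow> 'a) \<times> ('a \<Rightarrow> 'a)) set" where
  "roelcke_entourage G U = {(g, h). g \<in> G \<and> h \<in> G \<and> (\<exists>u\<in>U. \<exists>v\<in>U. h = u \<circ> g \<circ> v)}"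

definition roelcke_precompact :: "('a \<Rightarrow> 'a) set \<Rightarrow> ('a \<Rightarrow> 'a) set set \<Rightarrow> bool" where
  "roelcke_precompact G N \<longleftrightarrow>
     (\<forall>U\<in>N. \<exists>F. finite F \<and> F \<subseteq> G \<and> G \<subseteq> (\<Union>f\<in>F. roelcke_entourage G U `` {f}))"

end

(* For a proper regular interval J the classes of ~J are exactly the translates gJ.  They are
   convex, so Aut(X) acts on X/J by g(C) = g`C, and gluing automorphisms of the classes shows that
   this homomorphism is onto Aut(X/J).  Roelcke precompactness passes along such a surjective
   homomorphism, and back, as soon as the identity neighbourhoods correspond: the stabilisers of
   finitely many J-classes must contain, and for suitable J be contained in, tau_p-neighbourhoods
   of the identity.  The first holds because every class contains an open interval around each of
   its points.  The second is where the hypothesis enters: as no proper regular interval is simple,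
   the proper regular intervals through a point x intersect in {x} (a proper regular subinterval of
   the intersection would have a translate through x), so they form a neighbourhood base at x in
   the order topology, and finitely many of them are refined by a single J, obtained by
   translating and intersecting. *)

theory Submission
  imports Defs
begin

section \<open>Roelcke precompactness along surjective homomorphisms\<close>

definition roelcke_covered :: "('a \<Rightarrow> 'a) set \<Rightarrow> ('a \<Rightarrow> 'a) set \<Rightarrow> bool" where
  "roelcke_covered G U \<longleftrightarrow> (\<exists>F. finite F \<and> F \<subseteq> G \<and> G \<subseteq> (\<Union>f\<in>F. roelcke_entourage G U `` {f}))"

lemma roelcke_precompact_iff_covered:
  "roelcke_precompact G N \<longleftrightarrow> (\<forall>U\<in>N. roelcke_covered G U)"
  unfolding roelcke_precompact_def roelcke_covered_def ..

lemma roelcke_entourage_iff: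
  "(f, g) \<in> roelcke_entourage G U \<longleftrightarrow> f \<in> G \<and> g \<in> G \<and> (\<exists>u\<in>U. \<exists>v\<in>U. g = u \<circ> f \<circ> v)"
  unfolding roelcke_entourage_def by blast

locale function_group_hom =
  fixes G :: "('a \<Rightarrow> 'a) set" and A :: "('b \<Rightarrow> 'b) set" and h :: "('a \<Rightarrow> 'a) \<Rightarrow> 'b \<Rightarrow> 'b"
  assumes comp_closed: "g \<in> G \<Longrightarrow> k \<in> G \<Longrightarrow> g \<circ> k \<in> G"
    and inverse_exists: "g \<in> G \<Longrightarrow> \<exists>g'\<in>G. g' \<circ> g = id \<and> g \<circ> g' = id"
    and hom: "g \<in> G \<Longrightarrow> k \<in> G \<Longrightarrow> h (g \<circ> k) = h g \<circ> h k"
    and image_eq: "h ` G = A"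
begin

lemma roelcke_covered_image:
  assumes "roelcke_covered G W" and "W \<subseteq> G" and "h ` W \<subseteq> U"
  shows "roelcke_covered A U"
proof -
  obtain F where F: "finite F" "F \<subseteq> G" "G \<subseteq> (\<Union>f\<in>F. roelcke_entourage G W `` {f})"
    using assms(1) unfolding roelcke_covered_def by blast
  have "\<exists>f\<in>F. (h f, \<phi>) \<in> roelcke_entourage A U" if "\<phi> \<in> A" for \<phi>
  proof -
    obtain g where g: "g \<in> G" "\<phi> = h g" using \<open>\<phi> \<in> A\<close> image_eq by blast
    then obtain f u v where f: "f \<in> F" and uv: "u \<in> W" "v \<in> W" "g = u \<circ> f \<circ> v"
      using F(3) by (force simp: roelcke_entourage_iff)
    have "f \<in> G" "u \<in> G" "v \<in> G" using f uv F(2) assms(2) by auto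
    then have "\<phi> = h u \<circ> h f \<circ> h v" using g uv(3) by (simp add: hom comp_closed)
    moreover have "h u \<in> U" "h v \<in> U" using uv assms(3) by auto
    ultimately show ?thesis
      using f \<open>f \<in> G\<close> \<open>\<phi> \<in> A\<close> image_eq by (auto simp: roelcke_entourage_iff)
  qed
  then show ?thesis
    unfolding roelcke_covered_def using F(1,2) image_eq by (intro exI[of _ "h ` F"]) auto
qed

lemma roelcke_covered_preimage:
  assumes "roelcke_covered A U" and "U \<subseteq> A" and "\<And>g. g \<in> G \<Longrightarrow> h g \<in> U \<Longrightarrow> g \<in> W"
  shows "roelcke_covered G W"
proof -
  obtain F where F: "finite F" "F \<subseteq> A" "A \<subseteq> (\<Union>f\<in>F. roelcke_entourage A U `` {f})"
    using assms(1) unfolding roelcke_covered_def by blast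
  let ?lift = "inv_into G h"
  have lift: "?lift \<phi> \<in> G" "h (?lift \<phi>) = \<phi>" if "\<phi> \<in> A" for \<phi>
    using inv_into_into[of \<phi> h G] f_inv_into_f[of \<phi> h G] that image_eq by auto
  have "\<exists>f\<in>F. (?lift f, g) \<in> roelcke_entourage G W" if g: "g \<in> G" for g
  proof -
    obtain f \<psi> \<kappa> where f: "f \<in> F" and \<psi>\<kappa>: "\<psi> \<in> U" "\<kappa> \<in> U" "h g = \<psi> \<circ> f \<circ> \<kappa>"
      using F(3) g image_eq by (force simp: roelcke_entourage_iff)
    define u where "u = ?lift \<psi>"
    define w where "w = u \<circ> ?lift f"
    have uG: "u \<in> G" and hu: "h u = \<psi>"
      using lift \<psi>\<kappa>(1) assms(2) unfolding u_def by auto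
    have wG: "w \<in> G" and hw: "h w = \<psi> \<circ> f"
      using lift[of f] f F(2) uG hu unfolding w_def by (auto simp: hom comp_closed)
    obtain w' where w': "w' \<in> G" "w' \<circ> w = id" "w \<circ> w' = id" using inverse_exists[OF wG] by blast
    obtain g\<^sub>0 where g\<^sub>0: "g\<^sub>0 \<in> G" "\<kappa> = h g\<^sub>0" using \<psi>\<kappa>(2) assms(2) image_eq by blast
    define v where "v = w' \<circ> g"
    have vG: "v \<in> G" unfolding v_def using w'(1) g by (rule comp_closed)
    have "h v = h w' \<circ> h w \<circ> h g\<^sub>0"
      using w'(1) g \<psi>\<kappa>(3) hw g\<^sub>0(2) unfolding v_def by (simp add: hom comp_assoc)
    also have "\<dots> = h (w' \<circ> w \<circ> g\<^sub>0)" using w'(1) wG g\<^sub>0(1) by (simp add: hom comp_closed)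
    also have "\<dots> = \<kappa>" using w'(2) g\<^sub>0(2) by simp
    finally have "v \<in> W" using assms(3) vG \<psi>\<kappa>(2) by simp
    moreover have "u \<in> W" using assms(3) uG hu \<psi>\<kappa>(1) by simp
    moreover have "g = u \<circ> ?lift f \<circ> v"
      using w'(3) unfolding v_def w_def by (simp add: comp_assoc[symmetric])
    ultimately show ?thesis
      using g f lift(1) F(2) by (auto simp: roelcke_entourage_iff)
  qed
  then show ?thesis
    unfolding roelcke_covered_def using F(1,2) lift by (intro exI[of _ "?lift ` F"]) auto
qed

end

lemma Aut_bij: "g \<in> Aut X le \<Longrightarrow> bij_betw g X X"
  unfolding Aut_def by blast

lemma Aut_mem: "g \<in> Aut X le \<Longrightarrow> x \<in> X \<Longrightarrow> g x \<in> X"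
  using Aut_bij bij_betwE by blast

lemma Aut_outside: "g \<in> Aut X le \<Longrightarrow> x \<notin> X \<Longrightarrow> g x = x"
  unfolding Aut_def by blast

lemma Aut_mono: "g \<in> Aut X le \<Longrightarrow> x \<in> X \<Longrightarrow> y \<in> X \<Longrightarrow> le x y \<Longrightarrow> le (g x) (g y)"
  unfolding Aut_def by blast

lemma Aut_inj: "g \<in> Aut X le \<Longrightarrow> x \<in> X \<Longrightarrow> y \<in> X \<Longrightarrow> g x = g y \<Longrightarrow> x = y"
  using Aut_bij bij_betw_imp_inj_on inj_onD by metis

lemma Aut_image: "g \<in> Aut X le \<Longrightarrow> g ` X = X"
  using Aut_bij bij_betw_imp_surj_on by metis

lemma is_chain_subset: "is_chain X le \<Longrightarrow> K \<subseteq> X \<Longrightarrow> is_chain K le"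
  unfolding is_chain_def by (meson subsetD)

locale chain_carrier =
  fixes X :: "'a set" and le :: "'a \<Rightarrow> 'a \<Rightarrow> bool"
  assumes chain: "is_chain X le"
begin

abbreviation G :: "('a \<Rightarrow> 'a) set" where "G \<equiv> Aut X le"

definition lt :: "'a \<Rightarrow> 'a \<Rightarrow> bool" where "lt x y \<longleftrightarrow> le x y \<and> x \<noteq> y"

lemma chain_refl: "x \<in> X \<Longrightarrow> le x x"
  using chain unfolding is_chain_def by blast

lemma chain_antisym: "x \<in> X \<Longrightarrow> y \<in> X \<Longrightarrow> le x y \<Longrightarrow> le y x \<Longrightarrow> x = y"
  using chain unfolding is_chain_def by blast

lemma chain_linear: "x \<in> X \<Longrightarrow> y \<in> X \<Longrightarrow> le x y \<or> le y x"
  using chain unfolding is_chain_def by blast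

lemma lt_linear: "x \<in> X \<Longrightarrow> y \<in> X \<Longrightarrow> x \<noteq> y \<Longrightarrow> lt x y \<or> lt y x"
  unfolding lt_def using chain_linear by blast

lemma Aut_le_iff:
  assumes "g \<in> G" "x \<in> X" "y \<in> X"
  shows "le (g x) (g y) \<longleftrightarrow> le x y"
proof
  assume "le (g x) (g y)"
  show "le x y"
  proof (rule ccontr)
    assume "\<not> le x y"
    then have "le (g y) (g x)" using chain_linear[OF assms(2,3)] Aut_mono[OF assms(1,3,2)] by blast
    then have "x = y"
      using chain_antisym[OF Aut_mem[OF assms(1,2)] Aut_mem[OF assms(1,3)] \<open>le (g x) (g y)\<close>]
        Aut_inj[OF assms] by blast
    then show False using \<open>\<not> le x y\<close> assms(2) chain_refl by blast
  qed
qed (rule Aut_mono[OF assms])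

lemma Aut_lt_iff: "g \<in> G \<Longrightarrow> x \<in> X \<Longrightarrow> y \<in> X \<Longrightarrow> lt (g x) (g y) \<longleftrightarrow> lt x y"
  unfolding lt_def using Aut_le_iff Aut_inj by metis

lemma id_Aut: "id \<in> G"
  unfolding Aut_def by (simp add: bij_betw_id)

lemma comp_Aut: "g \<in> G \<Longrightarrow> h \<in> G \<Longrightarrow> g \<circ> h \<in> G"
  unfolding Aut_def by (auto intro: bij_betw_trans simp: bij_betwE)

definition aut_inv :: "('a \<Rightarrow> 'a) \<Rightarrow> 'a \<Rightarrow> 'a" where
  "aut_inv g z = (if z \<in> X then inv_into X g z else z)"

lemma aut_inv_right [simp]:
  assumes "g \<in> G"
  shows "g (aut_inv g z) = z"
  using Aut_image[OF assms] f_inv_into_f[of z g X] Aut_outside[OF assms] unfolding aut_inv_def by auto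

lemma aut_inv_left [simp]:
  assumes "g \<in> G"
  shows "aut_inv g (g z) = z"
  using Aut_bij[OF assms] Aut_mem[OF assms] Aut_outside[OF assms] unfolding aut_inv_def
  by (cases "z \<in> X") (simp_all add: bij_betw_inv_into_left)

lemma aut_inv_mem: "g \<in> G \<Longrightarrow> x \<in> X \<Longrightarrow> aut_inv g x \<in> X"
  unfolding aut_inv_def using Aut_image[of g X le] inv_into_into[of x g X] by auto

lemma aut_inv_Aut:
  assumes "g \<in> G"
  shows "aut_inv g \<in> G"
proof -
  have "bij_betw (aut_inv g) X X"
    by (rule bij_betw_byWitness[where f' = g]) (use assms aut_inv_mem Aut_mem in auto)
  moreover have "le (aut_inv g x) (aut_inv g y)" if "x \<in> X" "y \<in> X" "le x y" for x y
    using Aut_le_iff[OF assms aut_inv_mem[OF assms that(1)] aut_inv_mem[OF assms that(2)]] assms that by simp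
  ultimately show ?thesis unfolding Aut_def aut_inv_def by auto
qed

lemma comp_aut_inv: "g \<in> G \<Longrightarrow> g \<circ> aut_inv g = id"
  by (simp add: fun_eq_iff)

lemma aut_inv_comp: "g \<in> G \<Longrightarrow> aut_inv g \<circ> g = id"
  by (simp add: fun_eq_iff)

lemma is_interval_disjoint_le:
  assumes C: "is_interval X le C" and D: "is_interval X le D" and "C \<inter> D = {}"
    and "x \<in> C" "y \<in> D" "le x y" "a \<in> C" "b \<in> D"
  shows "le a b"
proof (rule ccontr)
  assume "\<not> le a b"
  have CD: "C \<subseteq> X" "D \<subseteq> X" using C D unfolding is_interval_def by blast+
  have "le b a" using chain_linear \<open>\<not> le a b\<close> assms CD by blast
  consider "le y a" | "le a y" "le x b" | "le b x"
    using chain_linear assms CD by blast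
  then show False
  proof cases
    case 1
    then have "y \<in> C" using C assms CD unfolding is_interval_def by blast
    then show False using assms by blast
  next
    case 2
    then have "b \<in> C" using C assms CD \<open>le b a\<close> unfolding is_interval_def by blast
    then show False using assms by blast
  next
    case 3
    then have "x \<in> D" using D assms CD unfolding is_interval_def by blast
    then show False using assms by blast
  qed
qed

end

section \<open>Regular intervals\<close>

lemma regular_interval_subset: "regular_interval X le J \<Longrightarrow> J \<subseteq> X"
  unfolding regular_interval_def is_interval_def by blast

lemma regular_interval_nonempty: "regular_interval X le J \<Longrightarrow> J \<noteq> {}"
  unfolding regular_interval_def is_interval_def by blast

lemma regular_interval_convex:
  "regular_interval X le J \<Longrightarrow> x \<in> J \<Longrightarrow> z \<in> J \<Longrightarrow> y \<in> X \<Longrightarrow> le x y \<Longrightarrow> le y z \<Longrightarrow> y \<in> J"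
  unfolding regular_interval_def is_interval_def by blast

lemma regular_interval_invariant:
  "regular_interval X le J \<Longrightarrow> x \<in> J \<Longrightarrow> y \<in> J \<Longrightarrow> g \<in> Aut X le \<Longrightarrow> g x \<in> J \<Longrightarrow> g y \<in> J"
  unfolding regular_interval_def by blast

lemma regular_interval_Inter:
  assumes "\<And>J. J \<in> \<J> \<Longrightarrow> regular_interval X le J" and "\<J> \<noteq> {}" and "x \<in> \<Inter>\<J>"
  shows "regular_interval X le (\<Inter>\<J>)"
  unfolding regular_interval_def is_interval_def
proof (intro conjI ballI impI)
  show "\<Inter>\<J> \<subseteq> X" using assms(1,2) regular_interval_subset by blast
  show "\<Inter>\<J> \<noteq> {}" using assms(3) by blast
next
  fix u w y assume "u \<in> \<Inter>\<J>" "w \<in> \<Inter>\<J>" "y \<in> X" "le u y \<and> le y w"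
  then show "y \<in> \<Inter>\<J>" by (auto intro: regular_interval_convex[OF assms(1)])
next
  fix u v g assume "u \<in> \<Inter>\<J>" "v \<in> \<Inter>\<J>" "g \<in> Aut X le" "g u \<in> \<Inter>\<J>"
  then show "g v \<in> \<Inter>\<J>" by (auto intro: regular_interval_invariant[OF assms(1)])
qed

lemma proper_regular_intervalD:
  assumes "proper_regular_interval X le J"
  shows "regular_interval X le J" and "J \<noteq> X" and "x \<in> J \<Longrightarrow> \<exists>y\<in>J. y \<noteq> x"
  using assms unfolding proper_regular_interval_def by blast+

context chain_carrier
begin

lemma regular_interval_image_eq:
  assumes "regular_interval X le J" "g \<in> G" "x \<in> J" "g x \<in> J"
  shows "g ` J = J"
proof
  show "g ` J \<subseteq> J" using regular_interval_invariant[OF assms(1,3) _ assms(2,4)] by blast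
  have "aut_inv g y \<in> J" if "y \<in> J" for y
    using regular_interval_invariant[OF assms(1,4) that aut_inv_Aut[OF assms(2)]] assms by simp
  then show "J \<subseteq> g ` J" using assms(2) by (metis aut_inv_right image_eqI subsetI)
qed

lemma regular_interval_image:
  assumes J: "regular_interval X le J" and g: "g \<in> G"
  shows "regular_interval X le (g ` J)"
  unfolding regular_interval_def is_interval_def
proof (intro conjI ballI impI)
  show "g ` J \<subseteq> X" using regular_interval_subset[OF J] Aut_mem[OF g] by blast
  show "g ` J \<noteq> {}" using regular_interval_nonempty[OF J] by blast
next
  fix u w y assume uw: "u \<in> g ` J" "w \<in> g ` J" and y: "y \<in> X" and "le u y \<and> le y w"
  then obtain p q where pq: "p \<in> J" "q \<in> J" "u = g p" "w = g q" by blast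
  have "le p (aut_inv g y)" "le (aut_inv g y) q"
    using Aut_le_iff[OF g] aut_inv_mem[OF g y] pq regular_interval_subset[OF J] g \<open>le u y \<and> le y w\<close>
    by (metis aut_inv_right subsetD)+
  then have "aut_inv g y \<in> J" using regular_interval_convex[OF J pq(1,2) aut_inv_mem[OF g y]] by blast
  then show "y \<in> g ` J" using g by (metis aut_inv_right image_eqI)
next
  fix u v h assume uv: "u \<in> g ` J" "v \<in> g ` J" and h: "h \<in> G" and hu: "h u \<in> g ` J"
  then obtain p q r where pqr: "p \<in> J" "q \<in> J" "r \<in> J" "u = g p" "v = g q" "h u = g r" by blast
  have k: "aut_inv g \<circ> h \<circ> g \<in> G" using comp_Aut aut_inv_Aut g h by blast
  have "(aut_inv g \<circ> h \<circ> g) p \<in> J" using pqr g by simp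
  then have "(aut_inv g \<circ> h \<circ> g) q \<in> J" using regular_interval_invariant[OF J pqr(1,2) k] by blast
  then show "h v \<in> g ` J" using pqr g by (metis aut_inv_right comp_apply image_eqI)
qed

lemma proper_regular_interval_image:
  assumes J: "proper_regular_interval X le J" and g: "g \<in> G"
  shows "proper_regular_interval X le (g ` J)"
proof -
  have JX: "J \<subseteq> X" using regular_interval_subset proper_regular_intervalD(1)[OF J] by blast
  have inj: "inj_on g X" using Aut_bij[OF g] bij_betw_imp_inj_on by blast
  have "g ` J \<noteq> g ` X" using proper_regular_intervalD(2)[OF J] inj_on_image_eq_iff[OF inj JX] by blast
  moreover have "\<nexists>a. g ` J = {a}"
  proof
    assume "\<exists>a. g ` J = {a}"
    then obtain a where a: "g ` J = {a}" by blast
    obtain p where p: "p \<in> J" using regular_interval_nonempty proper_regular_intervalD(1)[OF J] by blast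
    obtain q where q: "q \<in> J" "q \<noteq> p" using proper_regular_intervalD(3)[OF J p] by blast
    have "g p = g q" using a p q by (metis imageI singletonD)
    then show False using Aut_inj[OF g] p q JX by blast
  qed
  ultimately show ?thesis
    using regular_interval_image[OF proper_regular_intervalD(1)[OF J] g] Aut_image[OF g]
    unfolding proper_regular_interval_def by simp
qed

lemma regular_interval_below:
  assumes J: "regular_interval X le J" and "x \<in> J" "c \<in> X" "c \<notin> J" "le x c"
  shows "J \<subseteq> {y\<in>X. le y c \<and> y \<noteq> c}"
proof
  fix z assume z: "z \<in> J"
  have "z \<in> X" using z regular_interval_subset[OF J] by blast
  moreover have "\<not> le c z" using regular_interval_convex[OF J assms(2) z assms(3,5)] assms(4) by blast
  ultimately show "z \<in> {y\<in>X. le y c \<and> y \<noteq> c}" using chain_linear[OF _ assms(3)] assms(4) z by blast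
qed

lemma regular_interval_above:
  assumes J: "regular_interval X le J" and "x \<in> J" "c \<in> X" "c \<notin> J" "le c x"
  shows "J \<subseteq> {y\<in>X. le c y \<and> y \<noteq> c}"
proof
  fix z assume z: "z \<in> J"
  have "z \<in> X" using z regular_interval_subset[OF J] by blast
  moreover have "\<not> le z c" using regular_interval_convex[OF J z assms(2,3) _ assms(5)] assms(4) by blast
  ultimately show "z \<in> {y\<in>X. le c y \<and> y \<noteq> c}" using chain_linear[OF _ assms(3)] assms(4) z by blast
qed

lemma quot_rel_image:
  assumes g: "g \<in> G"
  shows "quot_rel X le (g ` J) = quot_rel X le J"
proof -
  have eqv: "(\<forall>k\<in>G. k x \<in> g ` J \<longrightarrow> k y \<in> g ` J) \<longleftrightarrow> (\<forall>k\<in>G. k x \<in> J \<longrightarrow> k y \<in> J)" for x y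
  proof
    assume gJ: "\<forall>k\<in>G. k x \<in> g ` J \<longrightarrow> k y \<in> g ` J"
    show "\<forall>k\<in>G. k x \<in> J \<longrightarrow> k y \<in> J"
    proof (intro ballI impI)
      fix k assume k: "k \<in> G" "k x \<in> J"
      then have "(g \<circ> k) x \<in> g ` J" by simp
      then have "(g \<circ> k) y \<in> g ` J" using gJ comp_Aut[OF g k(1)] by blast
      then obtain j where "j \<in> J" "g (k y) = g j" by auto
      then show "k y \<in> J" using aut_inv_left[OF g] by metis
    qed
  next
    assume J: "\<forall>k\<in>G. k x \<in> J \<longrightarrow> k y \<in> J"
    show "\<forall>k\<in>G. k x \<in> g ` J \<longrightarrow> k y \<in> g ` J"
    proof (intro ballI impI)
      fix k assume k: "k \<in> G" "k x \<in> g ` J"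
      then obtain j where "j \<in> J" "k x = g j" by blast
      then have "(aut_inv g \<circ> k) x \<in> J" using g by simp
      then have "aut_inv g (k y) \<in> J" using J comp_Aut[OF aut_inv_Aut[OF g] k(1)] by auto
      then show "k y \<in> g ` J" using aut_inv_right[OF g, of "k y"] by (metis image_eqI)
    qed
  qed
  show ?thesis unfolding quot_rel_def by (simp only: eqv)
qed

lemma restrict_Aut:
  assumes "K \<subseteq> X" "g \<in> G" "g ` K = K"
  shows "(\<lambda>z. if z \<in> K then g z else z) \<in> Aut K le"
proof -
  have "inj_on g K" using Aut_bij[OF assms(2)] assms(1) bij_betw_imp_inj_on inj_on_subset by blast
  then have "bij_betw (\<lambda>z. if z \<in> K then g z else z) K K"
    using assms(3) unfolding bij_betw_def inj_on_def by (auto simp: image_def)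
  then show ?thesis unfolding Aut_def using Aut_mono[OF assms(2)] assms(1) by auto
qed

lemma proper_regular_interval_of_subinterval:
  assumes I: "regular_interval X le I" and L: "proper_regular_interval I le L"
  shows "proper_regular_interval X le L"
proof -
  have RL: "regular_interval I le L" and "L \<noteq> I" using proper_regular_intervalD[OF L] by blast+
  have IX: "I \<subseteq> X" and LI: "L \<subseteq> I" using regular_interval_subset I RL by blast+
  have "regular_interval X le L"
    unfolding regular_interval_def is_interval_def
  proof (intro conjI ballI impI)
    show "L \<subseteq> X" using LI IX by blast
    show "L \<noteq> {}" using regular_interval_nonempty[OF RL] .
  next
    fix u v y assume uv: "u \<in> L" "v \<in> L" and y: "y \<in> X" "le u y \<and> le y v"
    then have "y \<in> I" using regular_interval_convex[OF I] LI by blast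
    then show "y \<in> L" using regular_interval_convex[OF RL] uv y by blast
  next
    fix u v g assume uv: "u \<in> L" "v \<in> L" and g: "g \<in> G" and gu: "g u \<in> L"
    have "g ` I = I" using regular_interval_image_eq[OF I g] uv gu LI by blast
    then have r: "(\<lambda>z. if z \<in> I then g z else z) \<in> Aut I le" using restrict_Aut[OF IX g] by blast
    have "(\<lambda>z. if z \<in> I then g z else z) u \<in> L" using gu uv LI by auto
    then have "(\<lambda>z. if z \<in> I then g z else z) v \<in> L"
      using regular_interval_invariant[OF RL uv(1,2) r] by blast
    then show "g v \<in> L" using uv LI by auto
  qed
  moreover have "L \<noteq> X" using \<open>L \<noteq> I\<close> LI IX by blast
  ultimately show ?thesis using L unfolding proper_regular_interval_def by blast
qed

end

locale homogeneous_chain = chain_carrier +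
  assumes transitive: "x \<in> X \<Longrightarrow> y \<in> X \<Longrightarrow> \<exists>g\<in>G. g x = y"

lemma homogeneous_chain_iff: "homogeneous_chain X le \<longleftrightarrow> homogeneous X le"
  unfolding homogeneous_chain_def homogeneous_chain_axioms_def chain_carrier_def homogeneous_def
  by blast

context homogeneous_chain
begin

lemma ex_Aut_into:
  assumes "regular_interval X le J" "x \<in> X"
  shows "\<exists>g\<in>G. g x \<in> J"
  using assms regular_interval_nonempty regular_interval_subset transitive by blast

lemma regular_interval_unbounded:
  assumes J: "regular_interval X le J" and "x \<in> J" "y \<in> J" "x \<noteq> y"
  shows "(\<exists>a\<in>J. lt a x) \<and> (\<exists>b\<in>J. lt x b)"
proof -
  have X: "x \<in> X" "y \<in> X" using assms regular_interval_subset by blast+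
  obtain g where g: "g \<in> G" "g y = x" using transitive[OF X(2,1)] by blast
  have gx: "g x \<in> J" using regular_interval_invariant[OF J assms(3,2) g(1)] g(2) assms(2) by simp
  have "lt x y \<or> lt y x" using lt_linear X assms(4) by blast
  then show ?thesis
  proof
    assume "lt x y"
    then have "lt (g x) x" using Aut_lt_iff[OF g(1) X] g(2) by simp
    then show ?thesis using \<open>lt x y\<close> gx assms(3) by blast
  next
    assume "lt y x"
    then have "lt x (g x)" using Aut_lt_iff[OF g(1) X(2,1)] g(2) by simp
    then show ?thesis using \<open>lt y x\<close> gx assms(3) by blast
  qed
qed

lemma proper_regular_interval_unbounded:
  assumes "proper_regular_interval X le J" "x \<in> J"
  shows "(\<exists>a\<in>J. lt a x) \<and> (\<exists>b\<in>J. lt x b)"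
  using proper_regular_intervalD[OF assms(1)] assms(2) regular_interval_unbounded by metis

lemma proper_regular_interval_Int:
  assumes J1: "proper_regular_interval X le J1" and J2: "proper_regular_interval X le J2"
    and x: "x \<in> J1" "x \<in> J2"
  shows "proper_regular_interval X le (J1 \<inter> J2)"
proof -
  have R: "regular_interval X le J1" "regular_interval X le J2"
    using J1 J2 by (simp_all add: proper_regular_intervalD)
  have XJ: "J1 \<subseteq> X" "J2 \<subseteq> X" using R regular_interval_subset by blast+
  obtain a1 where a1: "a1 \<in> J1" "lt a1 x" using proper_regular_interval_unbounded[OF J1 x(1)] by blast
  obtain a2 where a2: "a2 \<in> J2" "lt a2 x" using proper_regular_interval_unbounded[OF J2 x(2)] by blast
  have "a2 \<in> J1 \<or> a1 \<in> J2"
    using chain_linear[of a1 a2] a1 a2 XJ regular_interval_convex[OF R(1) a1(1) x(1)]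
      regular_interval_convex[OF R(2) a2(1) x(2)] unfolding lt_def by blast
  then have "\<exists>a\<in>J1 \<inter> J2. a \<noteq> x" using a1 a2 unfolding lt_def by blast
  then have "\<nexists>a. J1 \<inter> J2 = {a}" using x by (metis IntI singletonD)
  moreover have "regular_interval X le (J1 \<inter> J2)"
    using regular_interval_Inter[of "{J1, J2}"] R x by auto
  moreover have "J1 \<inter> J2 \<noteq> X" using proper_regular_intervalD(2)[OF J1] XJ by blast
  ultimately show ?thesis unfolding proper_regular_interval_def by blast
qed

lemma homogeneous_regular_interval:
  assumes I: "regular_interval X le I"
  shows "homogeneous I le"
proof -
  have IX: "I \<subseteq> X" using regular_interval_subset[OF I] .
  have "\<exists>r\<in>Aut I le. r x = y" if xy: "x \<in> I" "y \<in> I" for x y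
  proof -
    obtain g where g: "g \<in> G" "g x = y" using transitive xy IX by blast
    then have "g ` I = I" using regular_interval_image_eq[OF I g(1) xy(1)] xy(2) by simp
    then have "(\<lambda>z. if z \<in> I then g z else z) \<in> Aut I le" using restrict_Aut[OF IX g(1)] by blast
    then show ?thesis by (rule bexI[rotated]) (use g(2) xy(1) in simp)
  qed
  then show ?thesis unfolding homogeneous_def using is_chain_subset[OF chain IX] by blast
qed

end

section \<open>The quotient chain\<close>

context homogeneous_chain
begin

definition quot_class :: "'a set \<Rightarrow> 'a \<Rightarrow> 'a set" where
  "quot_class J x = quot_rel X le J `` {x}"

lemma quot_class_subset: "quot_class J x \<subseteq> X"
  unfolding quot_class_def quot_rel_def by blast

lemma quot_class_self: "x \<in> X \<Longrightarrow> x \<in> quot_class J x"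
  unfolding quot_class_def quot_rel_def by blast

lemma quot_class_eq_preimage:
  assumes J: "regular_interval X le J" and h: "h \<in> G" "x \<in> X" "h x \<in> J"
  shows "quot_class J x = {z\<in>X. h z \<in> J}"
proof
  show "quot_class J x \<subseteq> {z\<in>X. h z \<in> J}" unfolding quot_class_def quot_rel_def using h by blast
  have "g z \<in> J" if z: "z \<in> X" "h z \<in> J" and g: "g \<in> G" "g x \<in> J" for z g
  proof -
    have k: "g \<circ> aut_inv h \<in> G" using comp_Aut[OF g(1) aut_inv_Aut[OF h(1)]] .
    have "(g \<circ> aut_inv h) (h x) \<in> J" using g h by simp
    then have "(g \<circ> aut_inv h) (h z) \<in> J" using regular_interval_invariant[OF J h(3) z(2) k] by blast
    then show ?thesis using h by simp
  qed
  then show "{z\<in>X. h z \<in> J} \<subseteq> quot_class J x"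
    unfolding quot_class_def quot_rel_def using h(2) by blast
qed

lemma quot_class_of_member: "regular_interval X le J \<Longrightarrow> x \<in> J \<Longrightarrow> quot_class J x = J"
  using quot_class_eq_preimage[OF _ id_Aut] regular_interval_subset by fastforce

lemma quot_class_image:
  assumes J: "regular_interval X le J" and g: "g \<in> G" and x: "x \<in> X"
  shows "g ` quot_class J x = quot_class J (g x)"
proof -
  obtain h where h: "h \<in> G" "h (g x) \<in> J" using ex_Aut_into[OF J Aut_mem[OF g x]] by blast
  have "quot_class J (g x) = {z\<in>X. h z \<in> J}"
    using quot_class_eq_preimage[OF J h(1) Aut_mem[OF g x] h(2)] .
  moreover have "quot_class J x = {z\<in>X. h (g z) \<in> J}"
    using quot_class_eq_preimage[OF J comp_Aut[OF h(1) g] x] h(2) by simp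
  moreover have "g ` {z\<in>X. h (g z) \<in> J} = {z\<in>X. h z \<in> J}"
    using Aut_mem[OF g] aut_inv_mem[OF g] g by (auto intro!: image_eqI[of _ g "aut_inv g _"])
  ultimately show ?thesis by simp
qed

lemma quot_class_translate:
  "regular_interval X le J \<Longrightarrow> g \<in> G \<Longrightarrow> y \<in> J \<Longrightarrow> quot_class J (g y) = g ` J"
  using quot_class_image quot_class_of_member regular_interval_subset by (metis subsetD)

lemma quot_class_obtain_translate:
  assumes J: "regular_interval X le J" and x: "x \<in> X"
  obtains g where "g \<in> G" "quot_class J x = g ` J"
proof -
  obtain h where h: "h \<in> G" "h x \<in> J" using ex_Aut_into[OF J x] by blast
  have "quot_class J x = aut_inv h ` J"
    using quot_class_translate[OF J aut_inv_Aut[OF h(1)] h(2)] h(1) by simp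
  then show ?thesis using that aut_inv_Aut[OF h(1)] by blast
qed

lemma regular_interval_quot_class:
  "regular_interval X le J \<Longrightarrow> x \<in> X \<Longrightarrow> regular_interval X le (quot_class J x)"
  by (metis quot_class_obtain_translate regular_interval_image)

lemma proper_regular_interval_quot_class:
  "proper_regular_interval X le J \<Longrightarrow> x \<in> X \<Longrightarrow> proper_regular_interval X le (quot_class J x)"
  by (metis quot_class_obtain_translate proper_regular_interval_image proper_regular_intervalD(1))

lemma quot_class_eqI:
  assumes J: "regular_interval X le J" and "x \<in> X" "y \<in> quot_class J x"
  shows "quot_class J y = quot_class J x"
proof -
  obtain g where g: "g \<in> G" "quot_class J x = g ` J" using quot_class_obtain_translate[OF J assms(2)] .
  then obtain j where "j \<in> J" "y = g j" using assms(3) by blast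
  then show ?thesis using quot_class_translate[OF J g(1)] g(2) by simp
qed

lemma quot_class_image_eq:
  assumes J: "regular_interval X le J" and "g \<in> G" "x \<in> X" "g x \<in> quot_class J x"
  shows "g ` quot_class J x = quot_class J x"
  using quot_class_image[OF J assms(2,3)] quot_class_eqI[OF J assms(3,4)] by simp

lemma quot_class_image_interval: "g \<in> G \<Longrightarrow> quot_class (g ` J) = quot_class J"
  unfolding quot_class_def[abs_def] by (simp add: quot_rel_image)

lemma quot_class_mono:
  assumes K: "regular_interval X le K" and J: "regular_interval X le J" and "K \<subseteq> J" and y: "y \<in> X"
  shows "quot_class K y \<subseteq> quot_class J y"
proof -
  obtain h where h: "h \<in> G" "h y \<in> K" using ex_Aut_into[OF K y] by blast
  then show ?thesis
    using quot_class_eq_preimage[OF K h(1) y h(2)] quot_class_eq_preimage[OF J h(1) y] \<open>K \<subseteq> J\<close> by auto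
qed

lemma quot_class_le:
  assumes J: "regular_interval X le J" and "x \<in> X" "y \<in> X" "quot_class J x \<noteq> quot_class J y"
    and "le x y" "a \<in> quot_class J x" "b \<in> quot_class J y"
  shows "le a b"
proof (rule is_interval_disjoint_le)
  show "is_interval X le (quot_class J x)" "is_interval X le (quot_class J y)"
    using regular_interval_quot_class[OF J] assms(2,3) unfolding regular_interval_def by blast+
  show "quot_class J x \<inter> quot_class J y = {}"
    using quot_class_eqI[OF J] assms(2-4) by blast
qed (use assms quot_class_self in auto)

abbreviation quot :: "'a set \<Rightarrow> 'a set set" where
  "quot J \<equiv> quot_carrier X le J"

lemma quot_carrier_iff: "C \<in> quot J \<longleftrightarrow> (\<exists>x\<in>X. C = quot_class J x)"
  unfolding quot_carrier_def quotient_def quot_class_def by blast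

lemma quot_carrier_subset: "C \<in> quot J \<Longrightarrow> C \<subseteq> X"
  using quot_carrier_iff quot_class_subset by blast

lemma quot_carrier_eq_quot_class:
  "regular_interval X le J \<Longrightarrow> C \<in> quot J \<Longrightarrow> z \<in> C \<Longrightarrow> C = quot_class J z"
  using quot_carrier_iff quot_class_eqI by metis

lemma image_quot_carrier:
  "regular_interval X le J \<Longrightarrow> g \<in> G \<Longrightarrow> C \<in> quot J \<Longrightarrow> g ` C \<in> quot J"
  using quot_carrier_iff quot_class_image Aut_mem by metis

definition induced_aut :: "'a set \<Rightarrow> ('a \<Rightarrow> 'a) \<Rightarrow> 'a set \<Rightarrow> 'a set" where
  "induced_aut J g = (\<lambda>C. if C \<in> quot J then g ` C else C)"

lemma induced_aut_apply: "C \<in> quot J \<Longrightarrow> induced_aut J g C = g ` C"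
  unfolding induced_aut_def by simp

lemma induced_aut_comp:
  "regular_interval X le J \<Longrightarrow> g \<in> G \<Longrightarrow> h \<in> G \<Longrightarrow>
    induced_aut J (g \<circ> h) = induced_aut J g \<circ> induced_aut J h"
  unfolding induced_aut_def by (auto simp: fun_eq_iff image_comp image_quot_carrier)

lemma induced_aut_Aut:
  assumes J: "regular_interval X le J" and g: "g \<in> G"
  shows "induced_aut J g \<in> Aut (quot J) (quot_le le)"
proof -
  have gi: "aut_inv g \<in> G" using aut_inv_Aut[OF g] .
  have "bij_betw (induced_aut J g) (quot J) (quot J)"
  proof (rule bij_betw_byWitness[where f' = "induced_aut J (aut_inv g)"])
    show "\<forall>C\<in>quot J. induced_aut J (aut_inv g) (induced_aut J g C) = C"
      using image_quot_carrier[OF J g] g by (simp add: induced_aut_apply image_comp aut_inv_comp)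
    show "\<forall>C\<in>quot J. induced_aut J g (induced_aut J (aut_inv g) C) = C"
      using image_quot_carrier[OF J gi] g by (simp add: induced_aut_apply image_comp comp_aut_inv)
  qed (use image_quot_carrier[OF J] g gi in \<open>auto simp: induced_aut_apply\<close>)
  moreover have "quot_le le (induced_aut J g A) (induced_aut J g B)"
    if "A \<in> quot J" "B \<in> quot J" "quot_le le A B" for A B
    using that Aut_mono[OF g] quot_carrier_subset unfolding quot_le_def induced_aut_apply[OF that(1)]
      induced_aut_apply[OF that(2)] by blast
  ultimately show ?thesis unfolding Aut_def induced_aut_def by auto
qed

lemma Aut_quot_le_distinct_classes:
  assumes J: "regular_interval X le J" and \<phi>: "\<phi> \<in> Aut (quot J) (quot_le le)"
    and xy: "x \<in> X" "y \<in> X" "le x y" "quot_class J x \<noteq> quot_class J y"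
    and "a \<in> \<phi> (quot_class J x)" "b \<in> \<phi> (quot_class J y)"
  shows "le a b"
proof -
  have Q: "quot_class J x \<in> quot J" "quot_class J y \<in> quot J" using xy quot_carrier_iff by blast+
  have "quot_le le (quot_class J x) (quot_class J y)"
    using quot_class_le[OF J xy(1,2,4,3)] unfolding quot_le_def by blast
  then have "quot_le le (\<phi> (quot_class J x)) (\<phi> (quot_class J y))" using Aut_mono[OF \<phi> Q] by blast
  moreover have "\<phi> (quot_class J x) \<noteq> \<phi> (quot_class J y)" using Aut_inj[OF \<phi> Q] xy(4) by blast
  ultimately show ?thesis using assms(7,8) unfolding quot_le_def by blast
qed

lemma glued_Aut:
  assumes J: "regular_interval X le J" and \<phi>: "\<phi> \<in> Aut (quot J) (quot_le le)"
    and H: "\<And>C. C \<in> quot J \<Longrightarrow> H C \<in> G \<and> H C ` C = \<phi> C"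
  defines "L \<equiv> \<lambda>z. if z \<in> X then H (quot_class J z) z else z"
  shows "L \<in> G"
proof -
  have cQ: "quot_class J z \<in> quot J" if "z \<in> X" for z using that quot_carrier_iff by blast
  have \<phi>Q: "\<phi> C \<in> quot J" if "C \<in> quot J" for C
    using Aut_mem[OF \<phi> that] .
  have L\<phi>: "L z \<in> \<phi> (quot_class J z)" if "z \<in> X" for z
    using H[OF cQ[OF that]] imageI[OF quot_class_self[OF that, where J = J], of "H (quot_class J z)"] that
    by (simp add: L_def)
  have L_class: "quot_class J (L z) = \<phi> (quot_class J z)" if "z \<in> X" for z
    using quot_carrier_eq_quot_class[OF J \<phi>Q[OF cQ[OF that]] L\<phi>[OF that]] by simp
  have LX: "L z \<in> X" if "z \<in> X" for z using L\<phi>[OF that] quot_carrier_subset[OF \<phi>Q[OF cQ[OF that]]] by blast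
  have mono: "le (L x) (L y)" if xy: "x \<in> X" "y \<in> X" "le x y" for x y
  proof (cases "quot_class J x = quot_class J y")
    case True
    then show ?thesis using Aut_mono[OF conjunct1[OF H[OF cQ[OF xy(1)]]] xy] xy unfolding L_def by simp
  next
    case False
    then show ?thesis by (rule Aut_quot_le_distinct_classes[OF J \<phi> xy _ L\<phi>[OF xy(1)] L\<phi>[OF xy(2)]])
  qed
  have "inj_on L X"
  proof (rule inj_onI)
    fix x y assume xy: "x \<in> X" "y \<in> X" "L x = L y"
    then have "quot_class J x = quot_class J y" using L_class Aut_inj[OF \<phi> cQ cQ] by metis
    then show "x = y" using xy Aut_inj[OF conjunct1[OF H[OF cQ[OF xy(1)]]] xy(1,2)] unfolding L_def by simp
  qed
  moreover have "y \<in> L ` X" if y: "y \<in> X" for y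
  proof -
    have "quot_class J y \<in> \<phi> ` quot J" using Aut_image[OF \<phi>] cQ[OF y] by simp
    then obtain C where C: "C \<in> quot J" "\<phi> C = quot_class J y" by force
    then obtain w where w: "w \<in> C" "y = H C w" using H[OF C(1)] quot_class_self[OF y] by blast
    have wX: "w \<in> X" using w(1) quot_carrier_subset[OF C(1)] by blast
    have "quot_class J w = C" using quot_carrier_eq_quot_class[OF J C(1) w(1)] by simp
    then have "y = L w" using w(2) wX by (simp add: L_def)
    then show ?thesis using wX by blast
  qed
  ultimately have "bij_betw L X X" unfolding bij_betw_def using LX by blast
  then show ?thesis unfolding Aut_def L_def using mono by (auto simp: L_def)
qed

lemma induced_aut_surj:
  assumes J: "regular_interval X le J" and \<phi>: "\<phi> \<in> Aut (quot J) (quot_le le)"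
  shows "\<exists>L\<in>G. induced_aut J L = \<phi>"
proof -
  have "\<exists>h\<in>G. h ` C = \<phi> C" if C: "C \<in> quot J" for C
  proof -
    obtain x where x: "x \<in> X" "C = quot_class J x" using C quot_carrier_iff by blast
    obtain y where y: "y \<in> X" "\<phi> C = quot_class J y"
      using Aut_mem[OF \<phi> C] quot_carrier_iff by blast
    obtain h where "h \<in> G" "h x = y" using transitive[OF x(1) y(1)] by blast
    then show ?thesis using quot_class_image[OF J _ x(1)] x y by auto
  qed
  then obtain H where H: "\<And>C. C \<in> quot J \<Longrightarrow> H C \<in> G \<and> H C ` C = \<phi> C" by metis
  define L where "L \<equiv> \<lambda>z. if z \<in> X then H (quot_class J z) z else z"
  have LG: "L \<in> G" unfolding L_def using glued_Aut[OF J \<phi> H] by blast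
  have "induced_aut J L C = \<phi> C" for C
  proof (cases "C \<in> quot J")
    case True
    have "L ` C = H C ` C"
      using quot_carrier_eq_quot_class[OF J True] quot_carrier_subset[OF True] unfolding L_def
      by (intro image_cong) auto
    then show ?thesis using H[OF True] induced_aut_apply[OF True] by simp
  next
    case False
    then show ?thesis using \<phi> unfolding induced_aut_def Aut_def by simp
  qed
  then show ?thesis using LG by blast
qed

lemma function_group_hom_induced_aut:
  assumes "regular_interval X le J"
  shows "function_group_hom G (Aut (quot J) (quot_le le)) (induced_aut J)"
proof
  show "induced_aut J ` G = Aut (quot J) (quot_le le)"
    using induced_aut_Aut[OF assms] induced_aut_surj[OF assms] by blast
  show "\<exists>g'\<in>G. g' \<circ> g = id \<and> g \<circ> g' = id" if "g \<in> G" for g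
    using that aut_inv_Aut aut_inv_comp comp_aut_inv by blast
qed (use assms comp_Aut induced_aut_comp in auto)

definition class_stabiliser :: "'a set \<Rightarrow> 'a set \<Rightarrow> ('a \<Rightarrow> 'a) set" where
  "class_stabiliser J S = {g\<in>G. \<forall>x\<in>S. g ` quot_class J x = quot_class J x}"

definition quot_stabiliser :: "'a set \<Rightarrow> 'a set \<Rightarrow> ('a set \<Rightarrow> 'a set) set" where
  "quot_stabiliser J S = {\<phi>\<in>Aut (quot J) (quot_le le). \<forall>x\<in>S. \<phi> (quot_class J x) = quot_class J x}"

lemma induced_aut_mem_quot_stabiliser_iff:
  assumes J: "regular_interval X le J" and g: "g \<in> G" and S: "S \<subseteq> X"
  shows "induced_aut J g \<in> quot_stabiliser J S \<longleftrightarrow> g \<in> class_stabiliser J S"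
proof -
  have "induced_aut J g (quot_class J x) = g ` quot_class J x" if "x \<in> S" for x
    using that S quot_carrier_iff by (intro induced_aut_apply) blast
  then show ?thesis
    using induced_aut_Aut[OF J g] g unfolding class_stabiliser_def quot_stabiliser_def by auto
qed

lemma class_stabiliser_Un: "class_stabiliser J (S \<union> T) = class_stabiliser J S \<inter> class_stabiliser J T"
  unfolding class_stabiliser_def by blast

lemma class_stabiliser_image_interval: "g \<in> G \<Longrightarrow> class_stabiliser (g ` J) S = class_stabiliser J S"
  unfolding class_stabiliser_def by (simp add: quot_class_image_interval)

lemma class_stabiliser_mono:
  assumes K: "regular_interval X le K" and J: "regular_interval X le J" and "K \<subseteq> J" and "S \<subseteq> X"
  shows "class_stabiliser K S \<subseteq> class_stabiliser J S"
proof -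
  have "g ` quot_class J x = quot_class J x"
    if g: "g \<in> G" and x: "x \<in> S" and gK: "g ` quot_class K x = quot_class K x" for g x
  proof -
    have xX: "x \<in> X" using x \<open>S \<subseteq> X\<close> by blast
    have "g x \<in> quot_class J x"
      using gK quot_class_self[OF xX] quot_class_mono[OF K J \<open>K \<subseteq> J\<close> xX] by blast
    then show ?thesis using quot_class_image_eq[OF J g xX] by simp
  qed
  then show ?thesis unfolding class_stabiliser_def by blast
qed

lemma class_stabiliser_common_refinement:
  assumes J1: "proper_regular_interval X le J1" and J2: "proper_regular_interval X le J2"
    and S: "S1 \<subseteq> X" "S2 \<subseteq> X"
  obtains K where "proper_regular_interval X le K"
    "class_stabiliser K (S1 \<union> S2) \<subseteq> class_stabiliser J1 S1 \<inter> class_stabiliser J2 S2"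
proof -
  have R: "regular_interval X le J1" "regular_interval X le J2"
    using J1 J2 by (simp_all add: proper_regular_intervalD)
  obtain x where x: "x \<in> J1" using regular_interval_nonempty[OF R(1)] by blast
  obtain y where y: "y \<in> J2" using regular_interval_nonempty[OF R(2)] by blast
  obtain g where g: "g \<in> G" "g y = x" using transitive x y regular_interval_subset R by blast
  define K where "K = J1 \<inter> g ` J2"
  have K: "proper_regular_interval X le K"
    unfolding K_def using proper_regular_interval_Int[OF J1 proper_regular_interval_image[OF J2 g(1)] x]
      y g(2) by blast
  have RK: "regular_interval X le K" using proper_regular_intervalD(1)[OF K] .
  have "class_stabiliser K S1 \<subseteq> class_stabiliser J1 S1"
    by (rule class_stabiliser_mono[OF RK R(1) _ S(1)]) (simp add: K_def)
  moreover have "class_stabiliser K S2 \<subseteq> class_stabiliser (g ` J2) S2"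
    by (rule class_stabiliser_mono[OF RK regular_interval_image[OF R(2) g(1)] _ S(2)]) (simp add: K_def)
  ultimately show ?thesis
    using that[OF K] class_stabiliser_image_interval[OF g(1)] class_stabiliser_Un by auto
qed

end

section \<open>Proper regular intervals as a neighbourhood base\<close>

locale hereditarily_nonsimple_chain = homogeneous_chain +
  assumes not_simple: "\<not> simple_chain X le"
    and intervals_not_simple: "proper_regular_interval X le J \<Longrightarrow> \<not> simple_chain J le"
begin

lemma exists_proper_regular_interval: "\<exists>J. proper_regular_interval X le J"
  using not_simple homogeneous_chain_iff homogeneous_chain_axioms unfolding simple_chain_def by blast

lemma proper_regular_interval_at:
  assumes x: "x \<in> X"
  obtains J where "proper_regular_interval X le J" "x \<in> J"
proof -
  obtain J where J: "proper_regular_interval X le J" using exists_proper_regular_interval by blast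
  obtain j where j: "j \<in> J" using regular_interval_nonempty proper_regular_intervalD(1)[OF J] by blast
  obtain g where g: "g \<in> G" "g j = x"
    using transitive[OF _ x] j regular_interval_subset proper_regular_intervalD(1)[OF J] by blast
  show ?thesis using that[OF proper_regular_interval_image[OF J g(1)]] j g(2) by blast
qed

lemma proper_regular_interval_Inter_at:
  assumes x: "x \<in> X" and y: "y \<in> \<Inter>{J. proper_regular_interval X le J \<and> x \<in> J}" "y \<noteq> x"
  shows "proper_regular_interval X le (\<Inter>{J. proper_regular_interval X le J \<and> x \<in> J})"
    (is "proper_regular_interval X le ?I")
proof -
  obtain J0 where J0: "proper_regular_interval X le J0" "x \<in> J0" using proper_regular_interval_at[OF x] .
  have "regular_interval X le ?I"
    using J0 by (intro regular_interval_Inter) (auto dest: proper_regular_intervalD)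
  moreover have "?I \<noteq> X"
    using J0 proper_regular_intervalD[OF J0(1)] regular_interval_subset by blast
  moreover have "\<nexists>a. ?I = {a}"
  proof
    assume "\<exists>a. ?I = {a}"
    moreover have "x \<in> ?I" by blast
    ultimately show False using y by (metis singletonD)
  qed
  ultimately show ?thesis unfolding proper_regular_interval_def by blast
qed

lemma Inter_proper_regular_intervals_at:
  assumes x: "x \<in> X"
  shows "\<Inter>{J. proper_regular_interval X le J \<and> x \<in> J} = {x}"
proof -
  define I where "I = \<Inter>{J. proper_regular_interval X le J \<and> x \<in> J}"
  have xI: "x \<in> I" unfolding I_def by blast
  have only_x: "y = x" if "y \<in> I" for y
  proof (rule ccontr)
    assume "y \<noteq> x"
    then have PI: "proper_regular_interval X le I"
      using proper_regular_interval_Inter_at[OF x] \<open>y \<in> I\<close> unfolding I_def by blast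
    have RI: "regular_interval X le I" and IX: "I \<subseteq> X"
      using proper_regular_intervalD(1)[OF PI] regular_interval_subset by blast+
    obtain L where L: "proper_regular_interval I le L"
      using intervals_not_simple[OF PI] homogeneous_regular_interval[OF RI] unfolding simple_chain_def by blast
    have PL: "proper_regular_interval X le L" using proper_regular_interval_of_subinterval[OF RI L] .
    have LI: "L \<subseteq> I" "L \<noteq> I"
      using regular_interval_subset proper_regular_intervalD[OF L] by blast+
    obtain l where l: "l \<in> L" using regular_interval_nonempty proper_regular_intervalD(1)[OF PL] by blast
    obtain g where g: "g \<in> G" "g l = x" using transitive[OF _ x] l LI IX by blast
    \<comment> \<open>the translate of L through x is one of the intervals intersected in I\<close>
    have "I \<subseteq> g ` L"
      unfolding I_def using proper_regular_interval_image[OF PL g(1)] l g(2) by blast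
    moreover have "g ` I = I" using regular_interval_image_eq[OF RI g(1)] l LI g(2) xI by blast
    ultimately have "g ` L = g ` I" using LI by blast
    then have "L = I" using inj_on_image_eq_iff[OF bij_betw_imp_inj_on[OF Aut_bij[OF g(1)]]] LI IX by blast
    then show False using LI by blast
  qed
  have "I = {x}" using xI only_x by blast
  then show ?thesis unfolding I_def .
qed

lemma proper_regular_interval_avoiding:
  assumes "x \<in> X" "c \<noteq> x"
  obtains J where "proper_regular_interval X le J" "x \<in> J" "c \<notin> J"
  using Inter_proper_regular_intervals_at[OF assms(1)] assms(2) by blast

lemma subbasic_contains_proper_regular_interval:
  assumes "s \<in> insert X ((\<lambda>a. {y\<in>X. le y a \<and> y \<noteq> a}) ` X \<union> (\<lambda>a. {y\<in>X. le a y \<and> y \<noteq> a}) ` X)"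
    and x: "x \<in> s" "x \<in> X"
  shows "\<exists>J. proper_regular_interval X le J \<and> x \<in> J \<and> J \<subseteq> s"
proof -
  consider "s = X" | c where "c \<in> X" "s = {y\<in>X. le y c \<and> y \<noteq> c}"
    | c where "c \<in> X" "s = {y\<in>X. le c y \<and> y \<noteq> c}" using assms(1) by blast
  then show ?thesis
  proof cases
    case 1
    then show ?thesis
      using proper_regular_interval_at[OF x(2)] regular_interval_subset proper_regular_intervalD(1) by metis
  next
    case (2 c)
    then have "le x c" "c \<noteq> x" using x(1) by blast+
    then obtain J where J: "proper_regular_interval X le J" "x \<in> J" "c \<notin> J"
      using proper_regular_interval_avoiding[OF x(2)] by blast
    moreover have "J \<subseteq> s"
      using regular_interval_below[OF proper_regular_intervalD(1)[OF J(1)] J(2) 2(1) J(3) \<open>le x c\<close>] 2(2)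
      by simp
    ultimately show ?thesis by blast
  next
    case (3 c)
    then have "le c x" "c \<noteq> x" using x(1) by blast+
    then obtain J where J: "proper_regular_interval X le J" "x \<in> J" "c \<notin> J"
      using proper_regular_interval_avoiding[OF x(2)] by blast
    moreover have "J \<subseteq> s"
      using regular_interval_above[OF proper_regular_intervalD(1)[OF J(1)] J(2) 3(1) J(3) \<open>le c x\<close>] 3(2)
      by simp
    ultimately show ?thesis by blast
  qed
qed

lemma open_contains_proper_regular_interval:
  assumes "openin (order_topology_on X le) V" "x \<in> V" "x \<in> X"
  shows "\<exists>J. proper_regular_interval X le J \<and> x \<in> J \<and> J \<subseteq> V"
proof -
  have "generate_topology_on
      (insert X ((\<lambda>a. {y\<in>X. le y a \<and> y \<noteq> a}) ` X \<union> (\<lambda>a. {y\<in>X. le a y \<and> y \<noteq> a}) ` X)) V"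
    using assms(1) unfolding order_topology_on_def openin_topology_generated_by_iff .
  then show ?thesis using assms(2,3)
  proof (induction arbitrary: x)
    case Empty
    then show ?case by blast
  next
    case (Int A B)
    then obtain J1 J2 where "proper_regular_interval X le J1" "x \<in> J1" "J1 \<subseteq> A"
      and "proper_regular_interval X le J2" "x \<in> J2" "J2 \<subseteq> B" by (meson IntD1 IntD2)
    then show ?case using proper_regular_interval_Int by blast
  next
    case (UN K)
    then show ?case by blast
  next
    case (Basis s)
    then show ?case by (rule subbasic_contains_proper_regular_interval)
  qed
qed

lemma subbasic_contains_class_stabiliser:
  assumes "s \<in> insert G {{g\<in>G. g x \<in> V} |x V. x \<in> X \<and> openin (order_topology_on X le) V}"
    and "id \<in> s"
  shows "\<exists>J S. proper_regular_interval X le J \<and> finite S \<and> S \<subseteq> X \<and> class_stabiliser J S \<subseteq> s"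
proof -
  consider "s = G"
    | x V where "x \<in> X" "openin (order_topology_on X le) V" "s = {g\<in>G. g x \<in> V}" using assms(1) by blast
  then show ?thesis
  proof cases
    case 1
    obtain J where "proper_regular_interval X le J" using exists_proper_regular_interval by blast
    moreover have "class_stabiliser J {} \<subseteq> s" using 1 unfolding class_stabiliser_def by blast
    ultimately show ?thesis by blast
  next
    case (2 x V)
    then have "x \<in> V" using assms(2) by simp
    then obtain J where J: "proper_regular_interval X le J" "x \<in> J" "J \<subseteq> V"
      using open_contains_proper_regular_interval[OF 2(2) _ 2(1)] by blast
    then have "class_stabiliser J {x} \<subseteq> s"
      using quot_class_of_member[OF proper_regular_intervalD(1)[OF J(1)] J(2)] 2(3)
      unfolding class_stabiliser_def by blast
    then show ?thesis using J(1) 2(1) by blast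
  qed
qed

end

section \<open>Identity neighbourhoods\<close>

context chain_carrier
begin

lemma openin_order_topology_open_interval:
  assumes "a \<in> X" "b \<in> X"
  shows "openin (order_topology_on X le) {z\<in>X. lt a z \<and> lt z b}"
proof -
  have "{z\<in>X. lt a z \<and> lt z b} = {y\<in>X. le a y \<and> y \<noteq> a} \<inter> {y\<in>X. le y b \<and> y \<noteq> b}"
    unfolding lt_def by blast
  then show ?thesis
    unfolding order_topology_on_def using assms by (auto intro: topology_generated_by_Basis)
qed

lemma topspace_pointwise_topology: "topspace (pointwise_topology X le) = G"
  unfolding pointwise_topology_def by auto

lemma openin_pointwise_topology_eval:
  "x \<in> X \<Longrightarrow> openin (order_topology_on X le) V \<Longrightarrow>
    openin (pointwise_topology X le) {g\<in>G. g x \<in> V}"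
  unfolding pointwise_topology_def by (rule topology_generated_by_Basis) blast

end

context homogeneous_chain
begin

lemma quot_class_contains_open_nbhd:
  assumes J: "proper_regular_interval X le J" and x: "x \<in> X"
  shows "\<exists>V. openin (order_topology_on X le) V \<and> x \<in> V \<and> V \<subseteq> quot_class J x"
proof -
  have P: "proper_regular_interval X le (quot_class J x)"
    using proper_regular_interval_quot_class[OF J x] .
  then obtain a b where ab: "a \<in> quot_class J x" "b \<in> quot_class J x" "lt a x" "lt x b"
    using proper_regular_interval_unbounded quot_class_self[OF x] by blast
  have "{z\<in>X. lt a z \<and> lt z b} \<subseteq> quot_class J x"
    using regular_interval_convex[OF proper_regular_intervalD(1)[OF P] ab(1,2)] unfolding lt_def by blast
  moreover have "openin (order_topology_on X le) {z\<in>X. lt a z \<and> lt z b}"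
    using ab(1,2) quot_class_subset by (intro openin_order_topology_open_interval) blast+
  ultimately show ?thesis using ab(3,4) x by blast
qed

lemma class_stabiliser_contains_nhds:
  assumes J: "proper_regular_interval X le J" and S: "finite S" "S \<subseteq> X"
  shows "\<exists>W\<in>nhds_id_p X le. W \<subseteq> class_stabiliser J S"
proof -
  obtain V where V: "\<forall>x\<in>S. openin (order_topology_on X le) (V x) \<and> x \<in> V x \<and> V x \<subseteq> quot_class J x"
    using bchoice[of S] quot_class_contains_open_nbhd[OF J] S(2) by (metis subsetD)
  define W where "W = (\<Inter>x\<in>S. {g\<in>G. g x \<in> V x}) \<inter> G"
  have "openin (pointwise_topology X le) ((\<Inter>x\<in>S. {g\<in>G. g x \<in> V x}) \<inter> topspace (pointwise_topology X le))"
    using V S(2) by (intro openin_INT[OF S(1)] openin_pointwise_topology_eval) auto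
  then have "openin (pointwise_topology X le) W" unfolding W_def topspace_pointwise_topology .
  moreover have "id \<in> W" unfolding W_def using id_Aut V by auto
  moreover have "W \<subseteq> class_stabiliser J S"
  proof
    fix g assume g: "g \<in> W"
    have "g ` quot_class J x = quot_class J x" if x: "x \<in> S" for x
    proof (rule quot_class_image_eq[OF proper_regular_intervalD(1)[OF J]])
      show "g \<in> G" "x \<in> X" using g x S(2) unfolding W_def by blast+
      show "g x \<in> quot_class J x" using g x V unfolding W_def by blast
    qed
    then show "g \<in> class_stabiliser J S" using g unfolding W_def class_stabiliser_def by blast
  qed
  ultimately show ?thesis unfolding nhds_id_p_def using class_stabiliser_def by blast
qed

lemma quot_stabiliser_in_nhds_id_perm:
  assumes "finite S" "S \<subseteq> X"
  shows "quot_stabiliser J S \<in> nhds_id_perm (quot J) (quot_le le)"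
proof -
  have "quot_class J ` S \<subseteq> quot J" using assms(2) quot_carrier_iff by blast
  then show ?thesis
    unfolding nhds_id_perm_def quot_stabiliser_def using assms(1)
    by (intro CollectI conjI exI[of _ "quot_class J ` S"]) auto
qed

lemma nhds_id_perm_contains_quot_stabiliser:
  assumes "U \<in> nhds_id_perm (quot J) (quot_le le)"
  obtains S where "finite S" "S \<subseteq> X" "quot_stabiliser J S \<subseteq> U"
proof -
  obtain F where F: "finite F" "F \<subseteq> quot J" "{\<phi>\<in>Aut (quot J) (quot_le le). \<forall>C\<in>F. \<phi> C = C} \<subseteq> U"
    using assms unfolding nhds_id_perm_def by blast
  have "F \<subseteq> quot_class J ` X" using F(2) quot_carrier_iff by blast
  then obtain S where S: "S \<subseteq> X" "finite S" "F = quot_class J ` S"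
    using finite_subset_image[OF F(1)] by metis
  then have "quot_stabiliser J S = {\<phi>\<in>Aut (quot J) (quot_le le). \<forall>C\<in>F. \<phi> C = C}"
    unfolding quot_stabiliser_def by blast
  then show ?thesis using that[OF S(2,1)] F(3) by simp
qed

lemma roelcke_precompact_quot:
  assumes RP: "roelcke_precompact G (nhds_id_p X le)" and J: "proper_regular_interval X le J"
  shows "roelcke_precompact (Aut (quot J) (quot_le le)) (nhds_id_perm (quot J) (quot_le le))"
  unfolding roelcke_precompact_iff_covered
proof
  fix U assume "U \<in> nhds_id_perm (quot J) (quot_le le)"
  then obtain S where S: "finite S" "S \<subseteq> X" and SU: "quot_stabiliser J S \<subseteq> U"
    by (rule nhds_id_perm_contains_quot_stabiliser)
  obtain W where W: "W \<in> nhds_id_p X le" "W \<subseteq> class_stabiliser J S"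
    using class_stabiliser_contains_nhds[OF J S] by blast
  interpret function_group_hom G "Aut (quot J) (quot_le le)" "induced_aut J"
    using function_group_hom_induced_aut proper_regular_intervalD(1)[OF J] .
  show "roelcke_covered (Aut (quot J) (quot_le le)) U"
  proof (rule roelcke_covered_image)
    show "roelcke_covered G W" using RP W(1) unfolding roelcke_precompact_iff_covered by blast
    show "W \<subseteq> G" using W(1) unfolding nhds_id_p_def by blast
    then show "induced_aut J ` W \<subseteq> U"
      using W(2) SU induced_aut_mem_quot_stabiliser_iff[OF proper_regular_intervalD(1)[OF J] _ S(2)] by blast
  qed
qed

end

context hereditarily_nonsimple_chain
begin

lemma nhds_contains_class_stabiliser:
  assumes "W \<in> nhds_id_p X le"
  obtains J S where "proper_regular_interval X le J" "finite S" "S \<subseteq> X" "class_stabiliser J S \<subseteq> W"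
proof -
  obtain W0 where W0: "openin (pointwise_topology X le) W0" "id \<in> W0" "W0 \<subseteq> W"
    using assms unfolding nhds_id_p_def by blast
  have "generate_topology_on
      (insert G {{g\<in>G. g x \<in> V} |x V. x \<in> X \<and> openin (order_topology_on X le) V}) W0"
    using W0(1) unfolding pointwise_topology_def openin_topology_generated_by_iff .
  then have "\<exists>J S. proper_regular_interval X le J \<and> finite S \<and> S \<subseteq> X \<and> class_stabiliser J S \<subseteq> W0"
    using W0(2)
  proof induction
    case Empty
    then show ?case by blast
  next
    case (Int A B)
    then obtain J1 S1 J2 S2 where J1: "proper_regular_interval X le J1" "finite S1" "S1 \<subseteq> X"
        "class_stabiliser J1 S1 \<subseteq> A"
      and J2: "proper_regular_interval X le J2" "finite S2" "S2 \<subseteq> X" "class_stabiliser J2 S2 \<subseteq> B"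
      by (meson IntD1 IntD2)
    obtain K where "proper_regular_interval X le K"
      "class_stabiliser K (S1 \<union> S2) \<subseteq> class_stabiliser J1 S1 \<inter> class_stabiliser J2 S2"
      using class_stabiliser_common_refinement[OF J1(1) J2(1) J1(3) J2(3)] .
    moreover have "finite (S1 \<union> S2)" "S1 \<union> S2 \<subseteq> X" using J1(2,3) J2(2,3) by auto
    ultimately show ?case using J1(4) J2(4) by blast
  next
    case (UN K)
    then obtain k where k: "k \<in> K" "id \<in> k" by blast
    then obtain J S where "proper_regular_interval X le J" "finite S" "S \<subseteq> X" "class_stabiliser J S \<subseteq> k"
      using UN.IH by meson
    then show ?case using k(1) by blast
  next
    case (Basis s)
    then show ?case by (rule subbasic_contains_class_stabiliser)
  qed
  then show ?thesis using that W0(3) by blast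
qed

lemma roelcke_precompact_of_quot:
  assumes RQ: "\<And>J. proper_regular_interval X le J \<Longrightarrow>
    roelcke_precompact (Aut (quot J) (quot_le le)) (nhds_id_perm (quot J) (quot_le le))"
  shows "roelcke_precompact G (nhds_id_p X le)"
  unfolding roelcke_precompact_iff_covered
proof
  fix W assume "W \<in> nhds_id_p X le"
  then obtain J S where J: "proper_regular_interval X le J" and S: "finite S" "S \<subseteq> X"
    and SW: "class_stabiliser J S \<subseteq> W"
    by (rule nhds_contains_class_stabiliser)
  interpret function_group_hom G "Aut (quot J) (quot_le le)" "induced_aut J"
    using function_group_hom_induced_aut proper_regular_intervalD(1)[OF J] .
  show "roelcke_covered G W"
  proof (rule roelcke_covered_preimage)
    show "roelcke_covered (Aut (quot J) (quot_le le)) (quot_stabiliser J S)"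
      using RQ[OF J] quot_stabiliser_in_nhds_id_perm[OF S] unfolding roelcke_precompact_iff_covered by blast
    show "quot_stabiliser J S \<subseteq> Aut (quot J) (quot_le le)" unfolding quot_stabiliser_def by blast
    show "g \<in> W" if "g \<in> G" "induced_aut J g \<in> quot_stabiliser J S" for g
      using induced_aut_mem_quot_stabiliser_iff[OF proper_regular_intervalD(1)[OF J] that(1) S(2)] that(2) SW
      by blast
  qed
qed

end

theorem theorem5p3:
  fixes X :: "'a set" and le :: "'a \<Rightarrow> 'a \<Rightarrow> bool"
  assumes "homogeneous X le"
    and "\<not> simple_chain X le"
    and "\<forall>J. proper_regular_interval X le J \<longrightarrow> \<not> simple_chain J le"
  shows "roelcke_precompact (Aut X le) (nhds_id_p X le) \<longleftrightarrow>
    (\<forall>J. proper_regular_interval X le J \<longrightarrow>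
       roelcke_precompact (Aut (quot_carrier X le J) (quot_le le))
                          (nhds_id_perm (quot_carrier X le J) (quot_le le)))"
proof -
  interpret hereditarily_nonsimple_chain X le
    unfolding hereditarily_nonsimple_chain_def hereditarily_nonsimple_chain_axioms_def
    using assms homogeneous_chain_iff by blast
  show ?thesis using roelcke_precompact_quot roelcke_precompact_of_quot by blast
qed

end
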